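(* There exists a countable subset $B\subseteq\mathbf{M}$ such that: (1) $\mathrm{gcl}(B)=\mathbf{M}$; (2) $B_0\leqslant\mathbf{M}$ for every finite $B_0\subseteq B$; (3) every permutation of $B$ extends to an automorphism of $\mathbf{M}$.
   Context: Fix $\mathfrak{m}\ge2$. Graphs, $\delta(A)=\mathfrak{m}|A|-|\mathcal{R}(A)|$ ($\mathcal{R}(A)$ the edge set), $A\leqslant B$ iff $\delta(A')\ge\delta(A)$ for all $A\subseteq A'\subseteq B$ (for infinite $N$: $A\leqslant B$ for all finite $B\subseteq N$ containing $A$). $\mathsf{K_0}$ = finite graphs all of whose subgraphs have $\delta\ge0$. $\mathbf{M}$ is the $(\mathsf{K_0},\leqslant)$-generic: unique countable graph that is a union of a chain of finite $\leqslant$-closed subsets, in which isomorphisms between finite $\leqslant$-closed subsets extend to automorphisms, and into which every member of $\mathsf{K_0}$ embeds $\leqslant$-closedly. $\mathrm{cl}(A)$ is the smallest finite $\leqslant$-closed subset of $\mathbf{M}$ containing finite $A$; $\mathrm{d}(A)=\delta(\mathrm{cl}(A))$; $\mathrm{d}(m/A)=\mathrm{d}(\{m\}\cup A)-\mathrm{d}(A)$; for any $X\subseteq\mathbf{M}$, $\mathrm{gcl}(X)=\{m\in\mathbf{M}:\mathrm{d}(m/A)=0$ for some finite $A\subseteq X\}$. *)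

theory Defs
  imports Main "HOL-Library.Countable_Set"
begin

definition graph :: "'a set \<Rightarrow> ('a \<Rightarrow> 'a \<Rightarrow> bool) \<Rightarrow> bool" where
  "graph V E \<longleftrightarrow> (\<forall>x y. E x y \<longrightarrow> E y x) \<and> (\<forall>x. \<not> E x x)"

definition edges :: "('a \<Rightarrow> 'a \<Rightarrow> bool) \<Rightarrow> 'a set \<Rightarrow> 'a set set" where
  "edges E A = {{x, y} | x y. x \<in> A \<and> y \<in> A \<and> E x y}"

definition delta :: "nat \<Rightarrow> ('a \<Rightarrow> 'a \<Rightarrow> bool) \<Rightarrow> 'a set \<Rightarrow> int" where
  "delta m E A = int m * int (card A) - int (card (edges E A))"

text \<open>A \<le> N (strong / closed substructure); for finite N this is the usual
  definition, for infinite N it is "A \<le> B for all finite B with A \<subseteq> B \<subseteq> N".\<close>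
definition strong :: "nat \<Rightarrow> ('a \<Rightarrow> 'a \<Rightarrow> bool) \<Rightarrow> 'a set \<Rightarrow> 'a set \<Rightarrow> bool" where
  "strong m E A N \<longleftrightarrow> A \<subseteq> N \<and>
     (\<forall>B. finite B \<and> A \<subseteq> B \<and> B \<subseteq> N \<longrightarrow>
        (\<forall>A'. A \<subseteq> A' \<and> A' \<subseteq> B \<longrightarrow> delta m E A' \<ge> delta m E A))"

text \<open>Members of K_0, represented (up to isomorphism) as finite graphs on nat.\<close>
definition inK0 :: "nat \<Rightarrow> nat set \<Rightarrow> (nat \<Rightarrow> nat \<Rightarrow> bool) \<Rightarrow> bool" where
  "inK0 m W F \<longleftrightarrow> finite W \<and> graph W F \<and> (\<forall>A \<subseteq> W. delta m F A \<ge> 0)"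

definition automorphism :: "'a set \<Rightarrow> ('a \<Rightarrow> 'a \<Rightarrow> bool) \<Rightarrow> ('a \<Rightarrow> 'a) \<Rightarrow> bool" where
  "automorphism V E g \<longleftrightarrow> bij_betw g V V \<and> (\<forall>x\<in>V. \<forall>y\<in>V. E (g x) (g y) \<longleftrightarrow> E x y)"

definition generic :: "nat \<Rightarrow> 'a set \<Rightarrow> ('a \<Rightarrow> 'a \<Rightarrow> bool) \<Rightarrow> bool" where
  "generic m V E \<longleftrightarrow>
     graph V E \<and> countable V \<and>
     (\<forall>A \<subseteq> V. finite A \<longrightarrow> delta m E A \<ge> 0) \<and>
     (\<exists>C :: nat \<Rightarrow> 'a set. (\<forall>n. finite (C n) \<and> strong m E (C n) V \<and> C n \<subseteq> C (Suc n))
          \<and> (\<Union>n. C n) = V) \<and>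
     (\<forall>A B f. finite A \<and> finite B \<and> strong m E A V \<and> strong m E B V \<and> bij_betw f A B \<and>
          (\<forall>x\<in>A. \<forall>y\<in>A. E (f x) (f y) \<longleftrightarrow> E x y) \<longrightarrow>
          (\<exists>g. automorphism V E g \<and> (\<forall>x\<in>A. g x = f x))) \<and>
     (\<forall>W F. inK0 m W F \<longrightarrow>
          (\<exists>h. inj_on h W \<and> h ` W \<subseteq> V \<and> (\<forall>x\<in>W. \<forall>y\<in>W. E (h x) (h y) \<longleftrightarrow> F x y)
               \<and> strong m E (h ` W) V))"

definition cl :: "nat \<Rightarrow> 'a set \<Rightarrow> ('a \<Rightarrow> 'a \<Rightarrow> bool) \<Rightarrow> 'a set \<Rightarrow> 'a set" where
  "cl m V E A = (THE C. finite C \<and> A \<subseteq> C \<and> strong m E C V \<and>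
        (\<forall>C'. finite C' \<and> A \<subseteq> C' \<and> strong m E C' V \<longrightarrow> C \<subseteq> C'))"

definition dim :: "nat \<Rightarrow> 'a set \<Rightarrow> ('a \<Rightarrow> 'a \<Rightarrow> bool) \<Rightarrow> 'a set \<Rightarrow> int" where
  "dim m V E A = delta m E (cl m V E A)"

definition reldim :: "nat \<Rightarrow> 'a set \<Rightarrow> ('a \<Rightarrow> 'a \<Rightarrow> bool) \<Rightarrow> 'a \<Rightarrow> 'a set \<Rightarrow> int" where
  "reldim m V E x A = dim m V E (insert x A) - dim m V E A"

definition gcl :: "nat \<Rightarrow> 'a set \<Rightarrow> ('a \<Rightarrow> 'a \<Rightarrow> bool) \<Rightarrow> 'a set \<Rightarrow> 'a set" where
  "gcl m V E X = {x \<in> V. \<exists>A. finite A \<and> A \<subseteq> X \<and> reldim m V E x A = 0}"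

end

theory Submission
  imports Defs
begin

(*
  B is the union of an increasing chain of finite independent sets X, i.e. sets with d(X) = m|X|.
  If X lies in a finite strong set S with \<delta>(S) > m|X|, some u \<in> S has d(u/X) > 0. Adding a new
  edge b-w, with w joined to m points of S including u, keeps S \<union> {b, w} strong (it is realized
  inside V by genericity) and X \<union> {b} independent, and lowers \<delta>(S) - m|X| by one. Iterating, every
  vertex lies in a finite set D with \<delta>(D) = m|D \<inter> B|. Such tight sets are strong, closed under union
  and cover V; this gives gcl(B) = V and strongness of the finite subsets of B. No point of B is
  adjacent to a tight set not containing it, so a permutation of B combined with a finite partial
  isomorphism between tight sets extends to an automorphism by homogeneity, and back and forth
  extends the permutation itself.
*)

section \<open>The predimension\<close>

lemma edges_subset_Pow: "edges E A \<subseteq> Pow A"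
  unfolding edges_def by auto

lemma finite_edges: "finite A \<Longrightarrow> finite (edges E A)"
  by (rule finite_subset[OF edges_subset_Pow]) simp

lemma edges_mono: "A \<subseteq> B \<Longrightarrow> edges E A \<subseteq> edges E B"
  unfolding edges_def by blast

lemma edges_Int: "edges E (A \<inter> B) = edges E A \<inter> edges E B"
proof
  show "edges E A \<inter> edges E B \<subseteq> edges E (A \<inter> B)"
  proof
    fix e assume e: "e \<in> edges E A \<inter> edges E B"
    then obtain x y where "e = {x, y}" "x \<in> A" "y \<in> A" "E x y"
      unfolding edges_def by blast
    moreover have "e \<subseteq> B" using e edges_subset_Pow by blast
    ultimately show "e \<in> edges E (A \<inter> B)" unfolding edges_def by blast
  qed
  show "edges E (A \<inter> B) \<subseteq> edges E A \<inter> edges E B"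
    using edges_mono[of "A \<inter> B" A E] edges_mono[of "A \<inter> B" B E] by blast
qed

lemma delta_empty [simp]: "delta m E {} = 0"
  unfolding delta_def edges_def by simp

lemma delta_le_card: "delta m E A \<le> int m * int (card A)"
  unfolding delta_def by simp

lemma delta_submodular:
  assumes "finite A" "finite B"
  shows "delta m E (A \<union> B) + delta m E (A \<inter> B) \<le> delta m E A + delta m E B"
proof -
  have "card (edges E A \<union> edges E B) \<le> card (edges E (A \<union> B))"
    using assms edges_mono[of A "A \<union> B" E] edges_mono[of B "A \<union> B" E]
    by (intro card_mono finite_edges) auto
  moreover have "card (edges E A \<union> edges E B) + card (edges E (A \<inter> B))
      = card (edges E A) + card (edges E B)"
    using card_Un_Int[OF finite_edges[of A E] finite_edges[of B E]] assms by (simp add: edges_Int)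
  moreover have "card (A \<union> B) + card (A \<inter> B) = card A + card B"
    using card_Un_Int[OF assms] by simp
  then have "int m * int (card (A \<union> B)) + int m * int (card (A \<inter> B))
      = int m * int (card A) + int m * int (card B)"
    by (metis distrib_left of_nat_add)
  ultimately show ?thesis unfolding delta_def by linarith
qed

lemma delta_insert_le:
  assumes "finite A"
  shows "delta m E (insert x A) \<le> delta m E A + int m"
proof -
  have "card (edges E A) \<le> card (edges E (insert x A))"
    using assms by (intro card_mono finite_edges edges_mono) auto
  moreover have "int m * int (card (insert x A)) \<le> int m * (int (card A) + 1)"
    using assms by (intro mult_left_mono) (auto simp: card_insert_if)
  ultimately show ?thesis unfolding delta_def by (simp add: algebra_simps)
qed

lemma delta_Un_le:
  assumes "finite Z" "finite A"
  shows "delta m E (A \<union> Z) \<le> delta m E A + int m * int (card (Z - A))"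
  using assms(1)
proof (induction Z rule: finite_induct)
  case (insert z Z)
  show ?case
  proof (cases "z \<in> A")
    case True
    then show ?thesis using insert by (simp add: insert_absorb)
  next
    case False
    then have "card (insert z Z - A) = Suc (card (Z - A))"
      using insert by (simp add: insert_Diff_if)
    moreover have "delta m E (A \<union> insert z Z) \<le> delta m E (A \<union> Z) + int m"
      using delta_insert_le[of "A \<union> Z"] insert assms by simp
    ultimately show ?thesis using insert.IH by (simp add: algebra_simps)
  qed
qed simp

lemma delta_insert:
  assumes "graph V E" "finite A" "x \<notin> A"
  shows "delta m E (insert x A) = delta m E A + int m - int (card {a\<in>A. E x a})"
proof -
  have sym: "E y x" if "E x y" for x y using assms(1) that unfolding graph_def by blast
  have irrefl: "\<not> E x x" for x using assms(1) unfolding graph_def by blast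
  define N where "N = (\<lambda>a. {x, a}) ` {a\<in>A. E x a}"
  have "edges E (insert x A) \<subseteq> edges E A \<union> N"
  proof
    fix e assume "e \<in> edges E (insert x A)"
    then obtain y z where e: "e = {y, z}" "y \<in> insert x A" "z \<in> insert x A" "E y z"
      unfolding edges_def by blast
    then consider "y = x" "z \<in> A" | "z = x" "y \<in> A" | "y \<in> A" "z \<in> A"
      using irrefl by blast
    then show "e \<in> edges E A \<union> N"
    proof cases
      case 2
      then have "e = {x, y}" "E x y" using e sym by auto
      then show ?thesis using 2 unfolding N_def by blast
    qed (use e in \<open>auto simp: N_def edges_def\<close>)
  qed
  moreover have "edges E A \<union> N \<subseteq> edges E (insert x A)"
    using edges_mono[of A "insert x A" E] unfolding N_def edges_def by blast
  ultimately have "edges E (insert x A) = edges E A \<union> N" by (rule subset_antisym)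
  moreover have "edges E A \<inter> N = {}"
    unfolding N_def using edges_subset_Pow assms(3) by blast
  moreover have "card N = card {a\<in>A. E x a}"
    unfolding N_def using assms(3) by (intro card_image) (auto simp: inj_on_def doubleton_eq_iff)
  ultimately have "card (edges E (insert x A)) = card (edges E A) + card {a\<in>A. E x a}"
    using assms(2) by (simp add: card_Un_disjoint finite_edges N_def)
  then show ?thesis unfolding delta_def using assms by (simp add: algebra_simps)
qed

lemma delta_le_delta_insert:
  assumes "graph V E" "finite A" "x \<notin> A" "card {a\<in>A. E x a} \<le> m"
  shows "delta m E A \<le> delta m E (insert x A)"
  using delta_insert[OF assms(1-3), of m] assms(4) by simp

lemma delta_image:
  assumes "inj_on h A" "\<forall>x\<in>A. \<forall>y\<in>A. E' (h x) (h y) \<longleftrightarrow> E x y"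
  shows "delta m E' (h ` A) = delta m E A"
proof -
  have "edges E' (h ` A) = (`) h ` edges E A"
  proof
    show "edges E' (h ` A) \<subseteq> (`) h ` edges E A"
    proof
      fix e assume "e \<in> edges E' (h ` A)"
      then obtain a b where "e = h ` {a, b}" "a \<in> A" "b \<in> A" "E a b"
        using assms(2) unfolding edges_def by auto
      then show "e \<in> (`) h ` edges E A" unfolding edges_def by blast
    qed
    show "(`) h ` edges E A \<subseteq> edges E' (h ` A)"
      using assms(2) unfolding edges_def by auto
  qed
  moreover have "inj_on ((`) h) (edges E A)"
    using inj_on_image_Pow[OF assms(1)] edges_subset_Pow by (rule inj_on_subset)
  ultimately show ?thesis
    unfolding delta_def using card_image[OF assms(1)] by (simp add: card_image)
qed

lemma delta_Int_le_two_point_extension: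
  assumes F: "graph (insert p (insert q S)) F" "finite S" "p \<notin> S" "q \<notin> insert p S"
    and q: "card {a\<in>S. F q a} \<le> m" and p: "\<forall>a\<in>insert q S. F p a \<longrightarrow> a = q" and "1 \<le> m"
    and A: "A \<subseteq> insert p (insert q S)"
  shows "delta m F (A \<inter> S) \<le> delta m F A"
proof -
  define A0 where "A0 = A \<inter> S"
  define A1 where "A1 = A0 \<union> (A \<inter> {q})"
  have fin: "finite A0" "finite A1" unfolding A1_def A0_def using F(2) by auto
  have "delta m F A0 \<le> delta m F A1"
  proof (cases "q \<in> A")
    case True
    have "card {a\<in>A0. F q a} \<le> card {a\<in>S. F q a}"
      using F(2) unfolding A0_def by (intro card_mono) auto
    then have "card {a\<in>A0. F q a} \<le> m" using q by linarith
    then show ?thesis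
      using delta_le_delta_insert[OF F(1) fin(1)] F(4) True unfolding A1_def A0_def by simp
  qed (simp add: A1_def)
  also have "\<dots> \<le> delta m F A"
  proof (cases "p \<in> A")
    case True
    have "{a\<in>A1. F p a} \<subseteq> {q}" unfolding A1_def A0_def using p by auto
    then have "card {a\<in>A1. F p a} \<le> card {q}" by (intro card_mono) auto
    then have "card {a\<in>A1. F p a} \<le> m" using \<open>1 \<le> m\<close> by simp
    moreover have "A = insert p A1" "p \<notin> A1"
      using A True F(3,4) unfolding A1_def A0_def by auto
    ultimately show ?thesis using delta_le_delta_insert[OF F(1) fin(2)] by simp
  next
    case False
    then have "A = A1" using A unfolding A1_def A0_def by auto
    then show ?thesis by simp
  qed
  finally show ?thesis unfolding A0_def .
qed

lemma graph_with_attached_edge: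
  fixes enc :: "'a \<Rightarrow> nat"
  assumes E: "graph S E" and S: "finite S" "inj_on enc S" and N: "N \<subseteq> S" "card N = m" "1 \<le> m"
  obtains p q F where "p \<notin> enc ` S" "q \<notin> insert p (enc ` S)" "graph (insert p (insert q (enc ` S))) F"
    "\<forall>x\<in>S. \<forall>y\<in>S. F (enc x) (enc y) \<longleftrightarrow> E x y" "F p q" "\<forall>s\<in>S. \<not> F p (enc s)"
    "\<forall>s\<in>S. F q (enc s) \<longleftrightarrow> s \<in> N"
    "\<And>A. A \<subseteq> insert p (insert q (enc ` S)) \<Longrightarrow> delta m F (A \<inter> enc ` S) \<le> delta m F A"
proof -
  have fin: "finite (enc ` S)" using S(1) by simp
  obtain p where p: "p \<notin> enc ` S" using ex_new_if_finite[OF infinite_UNIV_nat fin] by blast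
  obtain q where q: "q \<notin> insert p (enc ` S)"
    using ex_new_if_finite[OF infinite_UNIV_nat finite.insertI[OF fin]] by blast
  define F where "F x y \<longleftrightarrow> (\<exists>a\<in>S. \<exists>b\<in>S. x = enc a \<and> y = enc b \<and> E a b) \<or>
    (x = p \<and> y = q) \<or> (x = q \<and> y = p) \<or> (x = q \<and> y \<in> enc ` N) \<or> (y = q \<and> x \<in> enc ` N)" for x y
  have enc_N: "enc s \<in> enc ` N \<longleftrightarrow> s \<in> N" if "s \<in> S" for s
    using inj_on_image_mem_iff[OF S(2) that N(1)] .
  have E_sym: "E a b \<Longrightarrow> E b a" and E_irrefl: "\<not> E a a" for a b using E unfolding graph_def by blast+
  have graph_F: "graph (insert p (insert q (enc ` S))) F"
    unfolding graph_def
  proof (intro conjI allI impI notI)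
    fix x y assume "F x y"
    then show "F y x" unfolding F_def using E_sym by blast
  next
    fix x assume "F x x"
    moreover have "\<not> (a \<in> S \<and> b \<in> S \<and> enc a = enc b \<and> E a b)" for a b
      using inj_onD[OF S(2)] E_irrefl by blast
    ultimately show False unfolding F_def using p q N(1) by blast
  qed
  have F_enc: "F (enc x) (enc y) \<longleftrightarrow> E x y" if "x \<in> S" "y \<in> S" for x y
  proof -
    have "enc x \<noteq> p" "enc x \<noteq> q" "enc y \<noteq> p" "enc y \<noteq> q" using that p q by auto
    moreover have "enc a = enc x \<Longrightarrow> a \<in> S \<Longrightarrow> a = x" "enc b = enc y \<Longrightarrow> b \<in> S \<Longrightarrow> b = y" for a b
      using inj_onD[OF S(2)] that by blast+
    ultimately show ?thesis unfolding F_def using that by auto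
  qed
  have "{a\<in>enc ` S. F q a} = enc ` N" using p q N(1) unfolding F_def by auto
  then have "card {a\<in>enc ` S. F q a} \<le> m" using card_image[OF inj_on_subset[OF S(2) N(1)]] N(2) by simp
  moreover have p_nbrs: "\<forall>a\<in>insert q (enc ` S). F p a \<longrightarrow> a = q" using p q N(1) unfolding F_def by auto
  ultimately have "delta m F (A \<inter> enc ` S) \<le> delta m F A"
    if "A \<subseteq> insert p (insert q (enc ` S))" for A
    using delta_Int_le_two_point_extension[OF graph_F fin p q _ _ N(3) that] by blast
  moreover have "F p q" "\<forall>s\<in>S. \<not> F p (enc s)" "\<forall>s\<in>S. F q (enc s) \<longleftrightarrow> s \<in> N"
    using p q enc_N p_nbrs unfolding F_def by auto
  ultimately show thesis using that[OF p q graph_F] F_enc by blast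
qed

section \<open>Strong subsets\<close>

lemma strong_iff:
  "strong m E A N \<longleftrightarrow>
     A \<subseteq> N \<and> (\<forall>Y. finite Y \<and> A \<subseteq> Y \<and> Y \<subseteq> N \<longrightarrow> delta m E A \<le> delta m E Y)"
proof
  assume "A \<subseteq> N \<and> (\<forall>Y. finite Y \<and> A \<subseteq> Y \<and> Y \<subseteq> N \<longrightarrow> delta m E A \<le> delta m E Y)"
  then show "strong m E A N"
    unfolding strong_def by (metis finite_subset order_trans)
qed (auto simp: strong_def)

lemma strongI:
  "A \<subseteq> N \<Longrightarrow> (\<And>Y. finite Y \<Longrightarrow> A \<subseteq> Y \<Longrightarrow> Y \<subseteq> N \<Longrightarrow> delta m E A \<le> delta m E Y)
    \<Longrightarrow> strong m E A N"
  unfolding strong_iff by blast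

lemma strong_subset: "strong m E A N \<Longrightarrow> A \<subseteq> N"
  unfolding strong_def by blast

lemma strong_delta_le:
  "strong m E A N \<Longrightarrow> finite Y \<Longrightarrow> A \<subseteq> Y \<Longrightarrow> Y \<subseteq> N \<Longrightarrow> delta m E A \<le> delta m E Y"
  unfolding strong_iff by blast

lemma delta_Int_strong_le:
  assumes "finite D" "strong m E D N" "finite Y" "Y \<subseteq> N"
  shows "delta m E (Y \<inter> D) \<le> delta m E Y"
proof -
  have "delta m E D \<le> delta m E (Y \<union> D)"
    using assms strong_subset[OF assms(2)] by (intro strong_delta_le) auto
  then show ?thesis using delta_submodular[OF assms(3,1), of m E] by linarith
qed

lemma strong_trans:
  assumes "finite D" "strong m E D N" "strong m E A D"
  shows "strong m E A N"
proof (rule strongI)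
  show "A \<subseteq> N" using assms(2,3) strong_subset by blast
  fix Y assume Y: "finite Y" "A \<subseteq> Y" "Y \<subseteq> N"
  have "delta m E A \<le> delta m E (Y \<inter> D)"
    using Y assms strong_subset[OF assms(3)] by (intro strong_delta_le) auto
  also have "\<dots> \<le> delta m E Y" using delta_Int_strong_le assms Y by blast
  finally show "delta m E A \<le> delta m E Y" .
qed

lemma strong_Int:
  assumes "finite C" "finite D" "strong m E C N" "strong m E D N"
  shows "strong m E (C \<inter> D) N"
proof -
  have "strong m E (C \<inter> D) D"
  proof (rule strongI)
    fix Y assume Y: "finite Y" "C \<inter> D \<subseteq> Y" "Y \<subseteq> D"
    then have "Y \<inter> C = C \<inter> D" by blast
    moreover have "Y \<subseteq> N" using Y strong_subset[OF assms(4)] by blast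
    ultimately show "delta m E (C \<inter> D) \<le> delta m E Y"
      using delta_Int_strong_le[OF assms(1,3) Y(1)] by simp
  qed blast
  then show ?thesis using strong_trans assms by blast
qed

lemma strong_image:
  assumes "inj_on h N" "\<forall>x\<in>N. \<forall>y\<in>N. E' (h x) (h y) \<longleftrightarrow> E x y" "strong m E A N"
  shows "strong m E' (h ` A) (h ` N)"
proof (rule strongI)
  have AN: "A \<subseteq> N" using strong_subset[OF assms(3)] .
  then show "h ` A \<subseteq> h ` N" by blast
  have delta_h: "delta m E' (h ` Z) = delta m E Z" if "Z \<subseteq> N" for Z
    using assms(1,2) that by (intro delta_image) (auto intro: inj_on_subset)
  fix Y assume Y: "finite Y" "h ` A \<subseteq> Y" "Y \<subseteq> h ` N"
  define Z where "Z = N \<inter> h -` Y"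
  have hZ: "h ` Z = Y" using Y(3) unfolding Z_def by blast
  have "finite Z"
    using Y(1) hZ inj_on_subset[OF assms(1)] by (metis Int_lower1 Z_def finite_imageD)
  moreover have "A \<subseteq> Z" using AN Y(2) unfolding Z_def by blast
  ultimately have "delta m E A \<le> delta m E Z"
    using assms(3) by (intro strong_delta_le) (auto simp: Z_def)
  then show "delta m E' (h ` A) \<le> delta m E' Y"
    using delta_h[OF AN] delta_h[of Z] hZ by (simp add: Z_def)
qed

lemma automorphism_strong:
  assumes "automorphism V E g" "strong m E A V"
  shows "strong m E (g ` A) V"
  using strong_image[of g V E E m A] assms
  unfolding automorphism_def by (simp add: bij_betw_def)

lemma automorphism_comp_strong_embedding:
  assumes g: "automorphism V E g"
    and h: "inj_on h W" "h ` W \<subseteq> V" "\<forall>x\<in>W. \<forall>y\<in>W. E (h x) (h y) \<longleftrightarrow> F x y" "strong m E (h ` W) V"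
  shows "inj_on (g \<circ> h) W" "(g \<circ> h) ` W \<subseteq> V" "\<forall>x\<in>W. \<forall>y\<in>W. E ((g \<circ> h) x) ((g \<circ> h) y) \<longleftrightarrow> F x y"
    "strong m E ((g \<circ> h) ` W) V"
proof -
  have g_edges: "\<forall>x\<in>V. \<forall>y\<in>V. E (g x) (g y) \<longleftrightarrow> E x y" and g_bij: "bij_betw g V V"
    using g unfolding automorphism_def by blast+
  show "inj_on (g \<circ> h) W"
    using h(1) inj_on_subset[OF bij_betw_imp_inj_on[OF g_bij] h(2)] by (rule comp_inj_on)
  show "(g \<circ> h) ` W \<subseteq> V" using h(2) g_bij bij_betw_imp_surj_on by fastforce
  show "\<forall>x\<in>W. \<forall>y\<in>W. E ((g \<circ> h) x) ((g \<circ> h) y) \<longleftrightarrow> F x y"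
    using h(2,3) g_edges by (simp add: image_subset_iff)
  show "strong m E ((g \<circ> h) ` W) V"
    unfolding image_comp[symmetric] using automorphism_strong[OF g h(4)] .
qed

lemma cl_strong:
  assumes "finite D" "strong m E D V" "S \<subseteq> D"
  shows "finite (cl m V E S) \<and> S \<subseteq> cl m V E S \<and> strong m E (cl m V E S) V \<and> cl m V E S \<subseteq> D"
proof -
  define P where "P = (\<lambda>C. C \<subseteq> D \<and> S \<subseteq> C \<and> strong m E C V)"
  obtain C0 where C0: "P C0" "\<And>C. P C \<Longrightarrow> card C0 \<le> card C"
    using ex_has_least_nat[of P D card] assms unfolding P_def by blast
  have fin: "finite C0" using C0(1) assms(1) finite_subset unfolding P_def by blast
  have least: "C0 \<subseteq> C'" if "finite C'" "S \<subseteq> C'" "strong m E C' V" for C'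
  proof -
    have "P (C0 \<inter> C')" using C0(1) that strong_Int[OF fin] unfolding P_def by blast
    then have "card C0 \<le> card (C0 \<inter> C')" using C0(2) by blast
    then have "C0 \<inter> C' = C0" using card_subset_eq[OF fin, of "C0 \<inter> C'"] card_mono[OF fin, of "C0 \<inter> C'"] by simp
    then show ?thesis by blast
  qed
  have "cl m V E S = C0"
    unfolding cl_def using C0(1) fin least unfolding P_def
    by (intro the_equality) (auto intro: subset_antisym)
  then show ?thesis using C0(1) fin unfolding P_def by simp
qed

lemma cl_eq_self: "finite A \<Longrightarrow> strong m E A V \<Longrightarrow> cl m V E A = A"
  using cl_strong[of A m E V A] by blast

section \<open>Partial isomorphisms as relations\<close>

lemma finite_subset_incseq_UN:
  assumes "\<And>n. C n \<subseteq> C (Suc n)" "finite F" "F \<subseteq> (\<Union>n. C n)"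
  obtains n where "F \<subseteq> C n"
proof -
  obtain n where "F \<subseteq> (\<Union>i<n. C i)" using finite_countable_subset assms(2,3) by blast
  moreover have "C i \<subseteq> C n" if "i < n" for i
    using lift_Suc_mono_le[of C, OF assms(1)] that by simp
  ultimately show thesis using that by blast
qed

definition iso_rel :: "('a \<Rightarrow> 'a \<Rightarrow> bool) \<Rightarrow> ('a \<times> 'a) set \<Rightarrow> bool" where
  "iso_rel E R \<longleftrightarrow>
     (\<forall>x y x' y'. (x, y) \<in> R \<longrightarrow> (x', y') \<in> R \<longrightarrow> (x = x' \<longleftrightarrow> y = y') \<and> (E x x' \<longleftrightarrow> E y y'))"

lemma iso_relD:
  assumes "iso_rel E R" "(x, y) \<in> R" "(x', y') \<in> R"
  shows "x = x' \<longleftrightarrow> y = y'" "E x x' \<longleftrightarrow> E y y'"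
  using assms unfolding iso_rel_def by blast+

lemma iso_rel_converse: "iso_rel E (R\<inverse>) \<longleftrightarrow> iso_rel E R"
  unfolding iso_rel_def by blast

lemma iso_rel_Un:
  assumes "iso_rel E R" "iso_rel E R'"
    and cross: "\<And>x y x' y'. (x, y) \<in> R \<Longrightarrow> (x', y') \<in> R' \<Longrightarrow>
      (x = x' \<longleftrightarrow> y = y') \<and> (E x x' \<longleftrightarrow> E y y') \<and> (E x' x \<longleftrightarrow> E y' y)"
  shows "iso_rel E (R \<union> R')"
  unfolding iso_rel_def
proof (intro allI impI)
  fix x y x' y' assume "(x, y) \<in> R \<union> R'" "(x', y') \<in> R \<union> R'"
  then consider "(x, y) \<in> R" "(x', y') \<in> R" | "(x, y) \<in> R" "(x', y') \<in> R'"
    | "(x, y) \<in> R'" "(x', y') \<in> R" | "(x, y) \<in> R'" "(x', y') \<in> R'" by blast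
  then show "(x = x' \<longleftrightarrow> y = y') \<and> (E x x' \<longleftrightarrow> E y y')"
  proof cases
    case 3
    then show ?thesis using cross[of x' y' x y] by blast
  qed (use iso_relD[OF assms(1)] iso_relD[OF assms(2)] cross in blast)+
qed

lemma iso_rel_UN_incseq:
  assumes "\<And>n. iso_rel E (Rs n)" "\<And>n. Rs n \<subseteq> Rs (Suc n)"
  shows "iso_rel E (\<Union>n. Rs n)"
  unfolding iso_rel_def
proof (intro allI impI)
  fix x y x' y' assume "(x, y) \<in> (\<Union>n. Rs n)" "(x', y') \<in> (\<Union>n. Rs n)"
  then have "{(x, y), (x', y')} \<subseteq> (\<Union>n. Rs n)" by blast
  then obtain n where "{(x, y), (x', y')} \<subseteq> Rs n"
    by (rule finite_subset_incseq_UN[of Rs, OF assms(2) finite.insertI[OF finite.insertI[OF finite.emptyI]]])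
  then have "(x, y) \<in> Rs n" "(x', y') \<in> Rs n" by auto
  from iso_relD[OF assms(1) this] show "(x = x' \<longleftrightarrow> y = y') \<and> (E x x' \<longleftrightarrow> E y y')" by blast
qed

lemma iso_rel_function:
  assumes "iso_rel E R"
  obtains f where "\<And>x y. (x, y) \<in> R \<Longrightarrow> f x = y" "bij_betw f (Domain R) (Range R)"
    "\<forall>x\<in>Domain R. \<forall>x'\<in>Domain R. E (f x) (f x') \<longleftrightarrow> E x x'"
proof
  define f where "f x = (THE y. (x, y) \<in> R)" for x
  show f: "f x = y" if "(x, y) \<in> R" for x y
    unfolding f_def using that iso_relD(1)[OF assms that] by (intro the_equality) auto
  then have graph: "(x, f x) \<in> R" if "x \<in> Domain R" for x using that by blast
  show "bij_betw f (Domain R) (Range R)"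
  proof (rule bij_betw_imageI)
    show "inj_on f (Domain R)"
    proof (rule inj_onI)
      fix x x' assume "x \<in> Domain R" "x' \<in> Domain R" "f x = f x'"
      then show "x = x'" using iso_relD(1)[OF assms graph graph] by simp
    qed
    show "f ` Domain R = Range R"
    proof
      show "f ` Domain R \<subseteq> Range R" using graph by blast
      show "Range R \<subseteq> f ` Domain R"
      proof
        fix y assume "y \<in> Range R"
        then obtain x where "(x, y) \<in> R" by blast
        then show "y \<in> f ` Domain R" using f by (metis Domain.DomainI image_eqI)
      qed
    qed
  qed
  show "\<forall>x\<in>Domain R. \<forall>x'\<in>Domain R. E (f x) (f x') \<longleftrightarrow> E x x'"
    using iso_relD(2)[OF assms graph graph] by simp
qed

lemma automorphism_of_iso_rel:
  assumes "iso_rel E R" "Domain R = V" "Range R = V"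
  obtains g where "automorphism V E g" "\<And>x y. (x, y) \<in> R \<Longrightarrow> g x = y"
proof -
  obtain f where "\<And>x y. (x, y) \<in> R \<Longrightarrow> f x = y" "bij_betw f (Domain R) (Range R)"
    "\<forall>x\<in>Domain R. \<forall>x'\<in>Domain R. E (f x) (f x') \<longleftrightarrow> E x x'"
    by (rule iso_rel_function[OF assms(1)]) blast
  then show thesis using that[of f] assms(2,3) unfolding automorphism_def by simp
qed

lemma back_and_forth_chain:
  assumes "countable V" "P {}"
    and extend: "\<And>R x. P R \<Longrightarrow> x \<in> V \<Longrightarrow> \<exists>R'. R \<subseteq> R' \<and> P R' \<and> x \<in> Domain R' \<and> x \<in> Range R'"
  obtains Rs where "\<forall>n. P (Rs n) \<and> Rs n \<subseteq> Rs (Suc n)"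
    "V \<subseteq> Domain (\<Union>n. Rs n)" "V \<subseteq> Range (\<Union>n. Rs n)"
proof (cases "V = {}")
  case True
  then show thesis using that[of "\<lambda>_. {}"] assms(2) by simp
next
  case False
  define v where "v = from_nat_into V"
  define step where
    "step R n = (SOME R'. R \<subseteq> R' \<and> P R' \<and> v n \<in> Domain R' \<and> v n \<in> Range R')" for R n
  define Rs where "Rs = rec_nat {} (\<lambda>n R. step R n)"
  have Rs_Suc: "Rs (Suc n) = step (Rs n) n" for n unfolding Rs_def by simp
  have v: "v n \<in> V" for n unfolding v_def using from_nat_into[OF False] .
  have step: "R \<subseteq> step R n \<and> P (step R n) \<and> v n \<in> Domain (step R n) \<and> v n \<in> Range (step R n)"
    if "P R" for R n
    unfolding step_def using someI_ex[OF extend[OF that v]] .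
  have P: "P (Rs n)" for n
  proof (induction n)
    case 0
    show ?case using assms(2) by (simp add: Rs_def)
  next
    case (Suc n)
    show ?case using step[OF Suc] Rs_Suc by simp
  qed
  have cover: "v n \<in> Domain (\<Union>n. Rs n) \<and> v n \<in> Range (\<Union>n. Rs n)" for n
    using step[OF P, of n n] Rs_Suc[of n] by blast
  show thesis
  proof
    show "\<forall>n. P (Rs n) \<and> Rs n \<subseteq> Rs (Suc n)" using P step[OF P] Rs_Suc by simp
    show "V \<subseteq> Domain (\<Union>n. Rs n)" "V \<subseteq> Range (\<Union>n. Rs n)"
      using cover from_nat_into_surj[OF assms(1)] unfolding v_def by (metis subsetI)+
  qed
qed

section \<open>The generic structure\<close>

locale generic_graph =
  fixes m :: nat and V :: "'a set" and E :: "'a \<Rightarrow> 'a \<Rightarrow> bool"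
  assumes m_ge_2: "m \<ge> 2" and generic: "generic m V E"
begin

abbreviation \<delta> :: "'a set \<Rightarrow> int" where "\<delta> \<equiv> delta m E"

lemma graph: "graph V E"
  using generic[unfolded generic_def] by (rule conjunct1)

lemma sym_E: "E x y \<Longrightarrow> E y x"
  using graph unfolding graph_def by blast

lemma irrefl_E: "\<not> E x x"
  using graph unfolding graph_def by blast

lemma countable_V: "countable V"
  using generic[unfolded generic_def, THEN conjunct2] by (rule conjunct1)

lemma delta_nonneg: "finite A \<Longrightarrow> A \<subseteq> V \<Longrightarrow> 0 \<le> \<delta> A"
  using generic[unfolded generic_def, THEN conjunct2, THEN conjunct2, THEN conjunct1] by blast

lemma strong_chain:
  obtains C where "\<And>n. finite (C n)" "\<And>n. strong m E (C n) V" "\<And>n. C n \<subseteq> C (Suc n)"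
    "(\<Union>n. C n) = V"
  using generic[unfolded generic_def, THEN conjunct2, THEN conjunct2, THEN conjunct2, THEN conjunct1]
  by blast

lemma homogeneous:
  assumes "finite A" "finite B" "strong m E A V" "strong m E B V" "bij_betw f A B"
    "\<forall>x\<in>A. \<forall>y\<in>A. E (f x) (f y) \<longleftrightarrow> E x y"
  obtains g where "automorphism V E g" "\<forall>x\<in>A. g x = f x"
  using generic[unfolded generic_def, THEN conjunct2, THEN conjunct2, THEN conjunct2, THEN conjunct2,
      THEN conjunct1] assms
  by blast

lemma homogeneous_iso_rel:
  assumes "finite R" "iso_rel E R" "strong m E (Domain R) V" "strong m E (Range R) V"
  obtains g where "automorphism V E g" "\<And>x y. (x, y) \<in> R \<Longrightarrow> g x = y"
proof -
  obtain f where f: "\<And>x y. (x, y) \<in> R \<Longrightarrow> f x = y" "bij_betw f (Domain R) (Range R)"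
    "\<forall>x\<in>Domain R. \<forall>x'\<in>Domain R. E (f x) (f x') \<longleftrightarrow> E x x'"
    by (rule iso_rel_function[OF assms(2)]) blast
  have "finite (Domain R)" "finite (Range R)" using assms(1) by (simp_all add: finite_Domain finite_Range)
  then obtain g where "automorphism V E g" "\<forall>x\<in>Domain R. g x = f x"
    using homogeneous[OF _ _ assms(3,4) f(2,3)] by blast
  then show thesis using that f(1) by (metis Domain.DomainI)
qed

lemma universal:
  assumes "inK0 m W F"
  obtains h where "inj_on h W" "h ` W \<subseteq> V" "\<forall>x\<in>W. \<forall>y\<in>W. E (h x) (h y) \<longleftrightarrow> F x y"
    "strong m E (h ` W) V"
  using generic[unfolded generic_def, THEN conjunct2, THEN conjunct2, THEN conjunct2, THEN conjunct2,
      THEN conjunct2] assms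
  by blast

lemma inK0_extension:
  fixes W :: "nat set" and F :: "nat \<Rightarrow> nat \<Rightarrow> bool"
  assumes S: "finite S" "S \<subseteq> V" and W: "finite W" "graph W F"
    and e: "inj_on e S" "\<forall>x\<in>S. \<forall>y\<in>S. F (e x) (e y) \<longleftrightarrow> E x y"
    and over_S: "\<And>A. A \<subseteq> W \<Longrightarrow> delta m F (A \<inter> e ` S) \<le> delta m F A"
  shows "inK0 m W F"
  unfolding inK0_def
proof (intro conjI allI impI W)
  fix A assume "A \<subseteq> W"
  define S0 where "S0 = S \<inter> e -` A"
  have "A \<inter> e ` S = e ` S0" unfolding S0_def by blast
  moreover have "delta m F (e ` S0) = \<delta> S0"
    using e unfolding S0_def by (intro delta_image) (auto intro: inj_on_subset)
  moreover have "0 \<le> \<delta> S0" using S unfolding S0_def by (intro delta_nonneg) auto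
  ultimately show "0 \<le> delta m F A" using over_S[OF \<open>A \<subseteq> W\<close>] by simp
qed

lemma realize_strong_extension:
  fixes W :: "nat set" and F :: "nat \<Rightarrow> nat \<Rightarrow> bool"
  assumes S: "finite S" "strong m E S V"
    and W: "finite W" "graph W F"
    and e: "inj_on e S" "e ` S \<subseteq> W" "\<forall>x\<in>S. \<forall>y\<in>S. F (e x) (e y) \<longleftrightarrow> E x y"
    and over_S: "\<And>A. A \<subseteq> W \<Longrightarrow> delta m F (A \<inter> e ` S) \<le> delta m F A"
  obtains k where "inj_on k W" "k ` W \<subseteq> V" "\<forall>x\<in>W. \<forall>y\<in>W. E (k x) (k y) \<longleftrightarrow> F x y"
    "strong m E (k ` W) V" "\<forall>s\<in>S. k (e s) = s"
proof -
  have "inK0 m W F"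
    using inK0_extension[OF S(1) strong_subset[OF S(2)] W e(1,3) over_S] .
  then obtain h where h: "inj_on h W" "h ` W \<subseteq> V" "\<forall>x\<in>W. \<forall>y\<in>W. E (h x) (h y) \<longleftrightarrow> F x y"
    "strong m E (h ` W) V"
    by (rule universal)
  have "strong m F (e ` S) W"
  proof (rule strongI)
    fix Y assume "finite Y" "e ` S \<subseteq> Y" "Y \<subseteq> W"
    then show "delta m F (e ` S) \<le> delta m F Y" using over_S[of Y] by (simp add: Int_absorb1)
  qed (rule e(2))
  then have "strong m E (h ` e ` S) (h ` W)" by (rule strong_image[OF h(1,3)])
  then have strong_heS: "strong m E (h ` e ` S) V" using strong_trans h(4) W(1) by blast
  define R where "R = (\<lambda>s. (h (e s), s)) ` S"
  have "finite R" unfolding R_def using S(1) by simp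
  moreover have "iso_rel E R"
    unfolding iso_rel_def R_def
  proof (intro allI impI)
    fix x y x' y' assume "(x, y) \<in> (\<lambda>s. (h (e s), s)) ` S" "(x', y') \<in> (\<lambda>s. (h (e s), s)) ` S"
    then obtain s t where st: "s \<in> S" "t \<in> S" "x = h (e s)" "y = s" "x' = h (e t)" "y' = t" by blast
    moreover have "e s \<in> W" "e t \<in> W" using st(1,2) e(2) by auto
    moreover have "h (e s) = h (e t) \<longleftrightarrow> s = t"
      using inj_onD[OF h(1)] inj_onD[OF e(1)] calculation by blast
    ultimately show "(x = x' \<longleftrightarrow> y = y') \<and> (E x x' \<longleftrightarrow> E y y')" using e(3) h(3) by simp
  qed
  moreover have "Domain R = h ` e ` S" "Range R = S" unfolding R_def by force+
  then have "strong m E (Domain R) V" "strong m E (Range R) V" using strong_heS S(2) by simp_all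
  ultimately obtain g where g: "automorphism V E g" "\<And>x y. (x, y) \<in> R \<Longrightarrow> g x = y"
    by (rule homogeneous_iso_rel) blast
  have "\<forall>s\<in>S. (g \<circ> h) (e s) = s" using g(2) unfolding R_def by auto
  then show ?thesis using that automorphism_comp_strong_embedding[OF g(1) h] by blast
qed

lemma exists_attached_edge:
  assumes S: "finite S" "strong m E S V" and N: "N \<subseteq> S" "card N = m"
  obtains b w where "b \<in> V - S" "w \<in> V - S" "b \<noteq> w" "E b w" "\<forall>s\<in>S. \<not> E b s"
    "\<forall>s\<in>S. E w s \<longleftrightarrow> s \<in> N" "strong m E (insert b (insert w S)) V"
proof -
  have SV: "S \<subseteq> V" using strong_subset[OF S(2)] .
  define enc where "enc = to_nat_on V"
  have inj: "inj_on enc S" unfolding enc_def using inj_on_subset[OF inj_on_to_nat_on[OF countable_V] SV] .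
  have "graph S E" using sym_E irrefl_E unfolding graph_def by blast
  moreover have "1 \<le> m" using m_ge_2 by simp
  ultimately obtain p q F where pq: "p \<notin> enc ` S" "q \<notin> insert p (enc ` S)"
    and F: "graph (insert p (insert q (enc ` S))) F" "\<forall>x\<in>S. \<forall>y\<in>S. F (enc x) (enc y) \<longleftrightarrow> E x y"
      "F p q" "\<forall>s\<in>S. \<not> F p (enc s)" "\<forall>s\<in>S. F q (enc s) \<longleftrightarrow> s \<in> N"
      "\<And>A. A \<subseteq> insert p (insert q (enc ` S)) \<Longrightarrow> delta m F (A \<inter> enc ` S) \<le> delta m F A"
    by (rule graph_with_attached_edge[OF _ S(1) inj N]) blast
  define W where "W = insert p (insert q (enc ` S))"
  have W: "finite W" "enc ` S \<subseteq> W" "p \<in> W" "q \<in> W" unfolding W_def using S(1) by auto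
  obtain k where k: "inj_on k W" "k ` W \<subseteq> V" "\<forall>x\<in>W. \<forall>y\<in>W. E (k x) (k y) \<longleftrightarrow> F x y"
    "strong m E (k ` W) V" "\<forall>s\<in>S. k (enc s) = s"
    using realize_strong_extension[OF S W(1) F(1)[folded W_def] inj W(2) F(2) F(6)[folded W_def]]
    by blast
  have k_new: "k x \<notin> S" if "x \<in> W" "x \<notin> enc ` S" for x
  proof
    assume "k x \<in> S"
    then have "k (enc (k x)) = k x" "enc (k x) \<in> W" using k(5) W(2) by blast+
    then have "enc (k x) = x" using inj_onD[OF k(1)] that(1) by blast
    then show False using that(2) \<open>k x \<in> S\<close> by (metis image_eqI)
  qed
  have E_k: "E (k x) s \<longleftrightarrow> F x (enc s)" if "x \<in> W" "s \<in> S" for x s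
    using k(3) k(5) that W(2) by (metis image_subset_iff)
  have "k ` W = insert (k p) (insert (k q) S)"
    unfolding W_def using k(5) by (force simp: image_comp)
  show thesis
  proof
    show "k p \<in> V - S" "k q \<in> V - S" using k(2) k_new W pq by auto
    show "k p \<noteq> k q" using inj_onD[OF k(1)] W pq by auto
    show "E (k p) (k q)" using k(3) W F(3) by blast
    show "\<forall>s\<in>S. \<not> E (k p) s" "\<forall>s\<in>S. E (k q) s \<longleftrightarrow> s \<in> N" using E_k W F(4,5) by auto
    show "strong m E (insert (k p) (insert (k q) S)) V" using k(4) \<open>k ` W = _\<close> by simp
  qed
qed

section \<open>Independent and tight sets\<close>

text \<open>Equivalently \<open>d(X) = m|X|\<close>, the largest value the dimension of \<open>X\<close> can take.\<close>

definition independent :: "'a set \<Rightarrow> bool" where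
  "independent X \<longleftrightarrow> X \<subseteq> V \<and> (\<forall>Y. finite Y \<and> X \<subseteq> Y \<and> Y \<subseteq> V \<longrightarrow> int m * int (card X) \<le> \<delta> Y)"

lemma independent_subset_V: "independent X \<Longrightarrow> X \<subseteq> V"
  unfolding independent_def by blast

lemma independent_delta_le:
  "independent X \<Longrightarrow> finite Y \<Longrightarrow> X \<subseteq> Y \<Longrightarrow> Y \<subseteq> V \<Longrightarrow> int m * int (card X) \<le> \<delta> Y"
  unfolding independent_def by blast

lemma independent_empty: "independent {}"
  unfolding independent_def using delta_nonneg by simp

lemma independent_subset:
  assumes "finite X" "independent X" "X0 \<subseteq> X"
  shows "independent X0"
  unfolding independent_def
proof (intro conjI allI impI)
  show "X0 \<subseteq> V" using assms independent_subset_V by blast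
  fix Y assume Y: "finite Y \<and> X0 \<subseteq> Y \<and> Y \<subseteq> V"
  have "int m * int (card X) \<le> \<delta> (Y \<union> X)"
    using assms Y independent_subset_V by (intro independent_delta_le) auto
  also have "\<dots> \<le> \<delta> Y + int m * int (card (X - Y))" using delta_Un_le assms(1) Y by blast
  finally have "int m * (int (card X) - int (card (X - Y))) \<le> \<delta> Y"
    by (simp add: right_diff_distrib)
  moreover have "card X0 + card (X - Y) \<le> card X"
    using card_Int_Diff[OF assms(1), of Y] card_mono[of "X \<inter> Y" X0] assms Y by auto
  then have "int m * int (card X0) \<le> int m * (int (card X) - int (card (X - Y)))"
    by (intro mult_left_mono) auto
  ultimately show "int m * int (card X0) \<le> \<delta> Y" by linarith
qed

lemma delta_Un_le_card_independent:
  assumes X: "independent X" and Y: "finite Y" "X \<subseteq> Y" "Y \<subseteq> V" "\<delta> Y \<le> int m * int (card X)"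
    and Z: "finite Z" "X \<subseteq> Z" "Z \<subseteq> V" "\<delta> Z \<le> int m * int (card X)"
  shows "\<delta> (Y \<union> Z) \<le> int m * int (card X)"
proof -
  have "int m * int (card X) \<le> \<delta> (Y \<inter> Z)"
    using Y Z by (intro independent_delta_le[OF X]) auto
  then show ?thesis using delta_submodular[OF Y(1) Z(1), of m E] Y Z by linarith
qed

text \<open>The vertex \<open>u\<close> found here has \<open>d(u/X) > 0\<close>. If there were none, the sets on which \<open>\<delta>\<close>
  attains \<open>m|X|\<close>, closed under union by submodularity, would cover \<open>S\<close>.\<close>

lemma exists_dim_raising_vertex:
  assumes X: "finite X" "independent X" and S: "finite S" "strong m E S V" "X \<subseteq> S"
    and gt: "int m * int (card X) < \<delta> S"
  obtains u where "u \<in> S"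
    "\<And>Y. finite Y \<Longrightarrow> insert u X \<subseteq> Y \<Longrightarrow> Y \<subseteq> V \<Longrightarrow> int m * int (card X) < \<delta> Y"
proof -
  have "\<exists>u\<in>S. \<forall>Y. finite Y \<and> insert u X \<subseteq> Y \<and> Y \<subseteq> V \<longrightarrow> int m * int (card X) < \<delta> Y"
  proof (rule ccontr)
    assume "\<not> ?thesis"
    then have low: "\<exists>Y. finite Y \<and> insert u X \<subseteq> Y \<and> Y \<subseteq> V \<and> \<delta> Y \<le> int m * int (card X)"
      if "u \<in> S" for u
      using that by (auto simp: not_less)
    have "\<exists>Y. finite Y \<and> X \<union> U \<subseteq> Y \<and> Y \<subseteq> V \<and> \<delta> Y \<le> int m * int (card X)"
      if "U \<subseteq> S" for U
      using finite_subset[OF that S(1)] that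
    proof (induction U rule: finite_induct)
      case empty
      show ?case
        using X(1) delta_le_card independent_subset_V[OF X(2)] by (intro exI[of _ X]) auto
    next
      case (insert u U)
      have "U \<subseteq> S" "u \<in> S" using insert.prems by auto
      obtain Y where "finite Y" "X \<union> U \<subseteq> Y" "Y \<subseteq> V" "\<delta> Y \<le> int m * int (card X)"
        using insert.IH[OF \<open>U \<subseteq> S\<close>] by blast
      moreover obtain Z where "finite Z" "insert u X \<subseteq> Z" "Z \<subseteq> V" "\<delta> Z \<le> int m * int (card X)"
        using low[OF \<open>u \<in> S\<close>] by blast
      ultimately show ?case
        using delta_Un_le_card_independent[OF X(2)] by (intro exI[of _ "Y \<union> Z"]) auto
    qed
    then obtain Y where Y: "finite Y" "X \<union> S \<subseteq> Y" "Y \<subseteq> V" "\<delta> Y \<le> int m * int (card X)"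
      by blast
    then have "\<delta> S \<le> \<delta> Y" using strong_delta_le[OF S(2)] by blast
    then show False using Y(4) gt by linarith
  qed
  then show thesis using that by blast
qed

lemma delta_attached_edge:
  assumes "finite Y" "b \<notin> Y" "w \<notin> Y" "b \<noteq> w" "E b w" "\<forall>y\<in>Y. \<not> E b y"
    "\<forall>y\<in>Y. E w y \<longleftrightarrow> y \<in> N"
  shows "\<delta> (insert b (insert w Y)) = \<delta> Y + 2 * int m - 1 - int (card (Y \<inter> N))"
proof -
  have "{y\<in>Y. E w y} = Y \<inter> N" "{y\<in>insert w Y. E b y} = {w}" using assms(5-7) by auto
  then show ?thesis using delta_insert[OF graph] assms(1-4) by simp
qed

lemma independent_insert_attached:
  assumes X: "finite X" "independent X" and S: "finite S" "X \<subseteq> S"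
    and N: "u \<in> N" "N \<subseteq> S" "card N = m"
    and raising: "\<And>Y. finite Y \<Longrightarrow> insert u X \<subseteq> Y \<Longrightarrow> Y \<subseteq> V \<Longrightarrow> int m * int (card X) < \<delta> Y"
    and bw: "b \<in> V - S" "w \<in> V - S" "b \<noteq> w" "E b w" "\<forall>s\<in>S. \<not> E b s"
      "\<forall>s\<in>S. E w s \<longleftrightarrow> s \<in> N" "strong m E (insert b (insert w S)) V"
  shows "independent (insert b X)"
  unfolding independent_def
proof (intro conjI allI impI)
  show "insert b X \<subseteq> V" using bw(1) independent_subset_V[OF X(2)] by blast
  fix Y assume Y: "finite Y \<and> insert b X \<subseteq> Y \<and> Y \<subseteq> V"
  define Y0 where "Y0 = Y \<inter> S"
  have Y0: "finite Y0" "X \<subseteq> Y0" "Y0 \<subseteq> V" "b \<notin> Y0" "w \<notin> Y0"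
    unfolding Y0_def using Y S bw by auto
  have X_Y0: "int m * int (card X) \<le> \<delta> Y0" using independent_delta_le[OF X(2)] Y0 by blast
  have bX: "b \<notin> X" using Y0(2,4) by blast
  have "int m * int (card X) + int m \<le> \<delta> (Y \<inter> insert b (insert w S))"
  proof (cases "w \<in> Y")
    case False
    then have "Y \<inter> insert b (insert w S) = insert b Y0" unfolding Y0_def using Y by auto
    moreover have "{y\<in>Y0. E b y} = {}" using bw(5) unfolding Y0_def by auto
    ultimately show ?thesis using delta_insert[OF graph Y0(1,4), of m] X_Y0 by (simp only:) simp
  next
    case True
    then have "Y \<inter> insert b (insert w S) = insert b (insert w Y0)" unfolding Y0_def using Y by auto
    moreover have "int m * int (card X) + 1 - int m \<le> \<delta> Y0 - int (card (Y0 \<inter> N))"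
    proof (cases "N \<subseteq> Y0")
      case True
      then have "int m * int (card X) < \<delta> Y0" using raising Y0 N(1) by blast
      moreover have "card (Y0 \<inter> N) = m" using True N(3) by (simp add: Int_absorb1)
      ultimately show ?thesis by simp
    next
      case False
      have "finite N" using N(3) m_ge_2 card.infinite by fastforce
      moreover have "Y0 \<inter> N \<subset> N" using False by blast
      ultimately have "card (Y0 \<inter> N) < m" using N(3) psubset_card_mono by metis
      then show ?thesis using X_Y0 by linarith
    qed
    moreover have "\<forall>y\<in>Y0. \<not> E b y" "\<forall>y\<in>Y0. E w y \<longleftrightarrow> y \<in> N"
      using bw(5,6) unfolding Y0_def by auto
    note delta_attached_edge[OF Y0(1,4,5) bw(3,4) this]
    ultimately show ?thesis by simp
  qed
  also have "\<dots> \<le> \<delta> Y"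
    using delta_Int_strong_le[OF _ bw(7)] S(1) Y by blast
  finally show "int m * int (card (insert b X)) \<le> \<delta> Y"
    using X(1) bX by (simp add: algebra_simps)
qed

text \<open>The attached edge raises \<open>\<delta>\<close> by \<open>m - 1\<close> while the independent set gains one point.\<close>

lemma independent_extension_step:
  assumes X: "finite X" "independent X" and S: "finite S" "strong m E S V" "X \<subseteq> S" "m \<le> card S"
    and d: "\<delta> S = int m * int (card X) + int (Suc k)"
  obtains b S' where "independent (insert b X)" "b \<notin> X" "finite S'" "strong m E S' V" "S \<subseteq> S'"
    "b \<in> S'" "\<delta> S' = int m * int (card (insert b X)) + int k"
proof -
  obtain u where u: "u \<in> S"
    "\<And>Y. finite Y \<Longrightarrow> insert u X \<subseteq> Y \<Longrightarrow> Y \<subseteq> V \<Longrightarrow> int m * int (card X) < \<delta> Y"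
    using exists_dim_raising_vertex[OF X S(1-3)] d by auto
  have "m - 1 \<le> card (S - {u})" using S(1,4) u(1) by simp
  then obtain N0 where N0: "N0 \<subseteq> S - {u}" "card N0 = m - 1" "finite N0"
    by (rule obtain_subset_with_card_n)
  define N where "N = insert u N0"
  have N: "u \<in> N" "N \<subseteq> S" "card N = m"
  proof -
    have "u \<notin> N0" using N0(1) by blast
    then show "u \<in> N" "N \<subseteq> S" "card N = m" unfolding N_def using N0 u(1) m_ge_2 by auto
  qed
  obtain b w where bw: "b \<in> V - S" "w \<in> V - S" "b \<noteq> w" "E b w" "\<forall>s\<in>S. \<not> E b s"
    "\<forall>s\<in>S. E w s \<longleftrightarrow> s \<in> N" "strong m E (insert b (insert w S)) V"
    by (rule exists_attached_edge[OF S(1,2) N(2,3)])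
  have "b \<notin> S" "w \<notin> S" using bw(1,2) by auto
  note delta_attached_edge[OF S(1) this bw(3,4,5,6)]
  moreover have "S \<inter> N = N" using N(2) by blast
  moreover have "b \<notin> X" using bw(1) S(3) by blast
  ultimately have "\<delta> (insert b (insert w S)) = int m * int (card (insert b X)) + int k"
    using d N(3) X(1) by (simp add: algebra_simps)
  moreover have "finite (insert b (insert w S))" "S \<subseteq> insert b (insert w S)" using S(1) by auto
  ultimately show thesis
    using that independent_insert_attached[OF X S(1,3) N u(2) bw] \<open>b \<notin> X\<close> bw(7) by blast
qed

text \<open>For independent \<open>X\<close> this is the least value \<open>\<delta> D\<close> can take.\<close>

definition tight :: "'a set \<Rightarrow> 'a set \<Rightarrow> bool" where
  "tight X D \<longleftrightarrow> finite D \<and> D \<subseteq> V \<and> \<delta> D = int m * int (card (D \<inter> X))"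

lemma exists_tight_superset_of_strong:
  assumes "finite X" "independent X" "finite S" "strong m E S V" "X \<subseteq> S" "m \<le> card S"
    "\<delta> S = int m * int (card X) + int k"
  shows "\<exists>X' D. X \<subseteq> X' \<and> finite X' \<and> independent X' \<and> tight X' D \<and> S \<subseteq> D"
  using assms
proof (induction k arbitrary: X S)
  case 0
  have "S \<inter> X = X" using "0.prems"(5) by blast
  then have "tight X S" unfolding tight_def using "0.prems"(3,4,7) strong_subset by simp
  then show ?case using "0.prems"(1,2) by blast
next
  case (Suc k)
  obtain b S' where b: "independent (insert b X)" "b \<notin> X" "finite S'" "strong m E S' V" "S \<subseteq> S'"
    "b \<in> S'" "\<delta> S' = int m * int (card (insert b X)) + int k"
    using independent_extension_step[OF Suc.prems] by blast
  have "m \<le> card S'" using card_mono[OF b(3,5)] Suc.prems(6) by linarith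
  moreover have "finite (insert b X)" "insert b X \<subseteq> S'" using Suc.prems(1,5) b(5,6) by auto
  ultimately obtain X' D where "insert b X \<subseteq> X'" "finite X'" "independent X'" "tight X' D" "S' \<subseteq> D"
    using Suc.IH[OF _ b(1) b(3,4) _ _ b(7)] by blast
  moreover have "X \<subseteq> X'" "S \<subseteq> D" using calculation(1,5) b(5) by auto
  ultimately show ?case by blast
qed

lemma exists_subset_card_m: "\<exists>T \<subseteq> V. finite T \<and> card T = m"
proof -
  have "inK0 m {0..<m} (\<lambda>_ _. False)" unfolding inK0_def graph_def delta_def edges_def by simp
  then obtain h where "inj_on h {0..<m}" "h ` {0..<m} \<subseteq> V" by (rule universal)
  then show ?thesis by (intro exI[of _ "h ` {0..<m}"]) (simp add: card_image)
qed

lemma exists_tight_extension: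
  assumes X: "finite X" "independent X" and v: "v \<in> V"
  shows "\<exists>X' D. X \<subseteq> X' \<and> finite X' \<and> independent X' \<and> tight X' D \<and> v \<in> D"
proof -
  obtain C where C: "\<And>n. finite (C n)" "\<And>n. strong m E (C n) V" "\<And>n. C n \<subseteq> C (Suc n)"
    "(\<Union>n. C n) = V"
    using strong_chain by blast
  obtain T where T: "T \<subseteq> V" "finite T" "card T = m" using exists_subset_card_m by blast
  have "insert v (X \<union> T) \<subseteq> (\<Union>n. C n)"
    using C(4) v T(1) independent_subset_V[OF X(2)] by blast
  then obtain n where n: "insert v (X \<union> T) \<subseteq> C n"
    using finite_subset_incseq_UN[of C, OF C(3)] X(1) T(2) by (metis finite_Un finite_insert)
  have card: "m \<le> card (C n)" using card_mono[OF C(1), of T n] n T(3) by blast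
  have "int m * int (card X) \<le> \<delta> (C n)"
    using independent_delta_le[OF X(2) C(1)] n strong_subset[OF C(2)] by blast
  then obtain k where "\<delta> (C n) - int m * int (card X) = int k"
    using nonneg_int_cases[of "\<delta> (C n) - int m * int (card X)"] by auto
  then have "\<delta> (C n) = int m * int (card X) + int k" by simp
  then obtain X' D where "X \<subseteq> X'" "finite X'" "independent X'" "tight X' D" "C n \<subseteq> D"
    using exists_tight_superset_of_strong[OF X C(1,2) _ card] n by auto
  then show ?thesis using n by auto
qed

section \<open>The basis\<close>

lemma V_nonempty: "V \<noteq> {}"
  using exists_subset_card_m m_ge_2 by fastforce

primrec basis_seq :: "nat \<Rightarrow> 'a set" where
  "basis_seq 0 = {}"
| "basis_seq (Suc n) = (SOME X. basis_seq n \<subseteq> X \<and> finite X \<and> independent X \<and>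
     (\<exists>D. tight X D \<and> from_nat_into V n \<in> D))"

definition basis :: "'a set" where
  "basis = (\<Union>n. basis_seq n)"

lemma basis_seq_Suc:
  assumes "finite (basis_seq n)" "independent (basis_seq n)"
  shows "basis_seq n \<subseteq> basis_seq (Suc n) \<and> finite (basis_seq (Suc n)) \<and>
    independent (basis_seq (Suc n)) \<and> (\<exists>D. tight (basis_seq (Suc n)) D \<and> from_nat_into V n \<in> D)"
  using someI_ex[OF exists_tight_extension[OF assms from_nat_into[OF V_nonempty]]] by simp

lemma finite_independent_basis_seq: "finite (basis_seq n) \<and> independent (basis_seq n)"
  by (induction n) (use independent_empty basis_seq_Suc in auto)

lemma basis_subset_V: "basis \<subseteq> V"
  unfolding basis_def using finite_independent_basis_seq[THEN conjunct2, THEN independent_subset_V]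
  by (simp add: UN_subset_iff)

lemma countable_basis: "countable basis"
  unfolding basis_def using finite_independent_basis_seq by (simp add: countable_finite)

lemma independent_basis_subset:
  assumes "X \<subseteq> basis" "finite X"
  shows "independent X"
proof -
  have "basis_seq n \<subseteq> basis_seq (Suc n)" for n
    using basis_seq_Suc finite_independent_basis_seq by blast
  then obtain n where "X \<subseteq> basis_seq n"
    using finite_subset_incseq_UN[of basis_seq X] assms unfolding basis_def by blast
  then show ?thesis
    using independent_subset[OF finite_independent_basis_seq[THEN conjunct1]
        finite_independent_basis_seq[THEN conjunct2]] by blast
qed

lemma delta_ge_basis:
  assumes "finite A" "A \<subseteq> V"
  shows "int m * int (card (A \<inter> basis)) \<le> \<delta> A"
proof (rule independent_delta_le)
  show "independent (A \<inter> basis)" using assms(1) by (intro independent_basis_subset) auto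
qed (use assms in auto)

lemma tight_basis_strong:
  assumes "tight basis A"
  shows "strong m E A V"
proof (rule strongI)
  show "A \<subseteq> V" using assms unfolding tight_def by blast
  fix Y assume Y: "finite Y" "A \<subseteq> Y" "Y \<subseteq> V"
  have "card (A \<inter> basis) \<le> card (Y \<inter> basis)" using Y by (intro card_mono) auto
  then have "int m * int (card (A \<inter> basis)) \<le> int m * int (card (Y \<inter> basis))"
    by (simp add: mult_left_mono)
  then show "\<delta> A \<le> \<delta> Y"
    using delta_ge_basis[OF Y(1,3)] assms unfolding tight_def by (simp add: order_trans)
qed

lemma tight_basis_empty: "tight basis {}"
  unfolding tight_def by simp

lemma tight_basis_subset_basis:
  assumes "X \<subseteq> basis" "finite X"
  shows "tight basis X"
proof -
  have "int m * int (card X) \<le> \<delta> X"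
    using independent_basis_subset[OF assms] independent_delta_le assms basis_subset_V by blast
  moreover have "X \<inter> basis = X" using assms by blast
  ultimately show ?thesis using assms basis_subset_V delta_le_card[of m E X] unfolding tight_def by auto
qed

lemma tight_basis_mono:
  assumes "tight X D" "X \<subseteq> basis"
  shows "tight basis D"
proof -
  have "card (D \<inter> X) \<le> card (D \<inter> basis)" using assms unfolding tight_def by (intro card_mono) auto
  then have "int m * int (card (D \<inter> X)) \<le> int m * int (card (D \<inter> basis))"
    by (simp add: mult_left_mono)
  then have "\<delta> D \<le> int m * int (card (D \<inter> basis))" using assms unfolding tight_def by simp
  then show ?thesis using delta_ge_basis assms unfolding tight_def by fastforce
qed

lemma tight_basis_cover:
  assumes "x \<in> V"
  obtains D where "tight basis D" "x \<in> D"
proof -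
  obtain n where n: "x = from_nat_into V n" using from_nat_into_surj[OF countable_V assms] by blast
  obtain D where D: "tight (basis_seq (Suc n)) D" "x \<in> D"
    using basis_seq_Suc[OF finite_independent_basis_seq[THEN conjunct1]
        finite_independent_basis_seq[THEN conjunct2]] n by blast
  have "tight basis D" by (rule tight_basis_mono[OF D(1)]) (unfold basis_def, rule UN_upper, rule UNIV_I)
  then show thesis using that D(2) by blast
qed

lemma tight_basis_Un:
  assumes "tight basis A" "tight basis B"
  shows "tight basis (A \<union> B)"
proof -
  have fin: "finite A" "finite B" "A \<union> B \<subseteq> V" "A \<inter> B \<subseteq> V" using assms unfolding tight_def by auto
  have "card ((A \<union> B) \<inter> basis) + card ((A \<inter> B) \<inter> basis) = card (A \<inter> basis) + card (B \<inter> basis)"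
    using card_Un_Int[of "A \<inter> basis" "B \<inter> basis"] fin by (simp add: Int_Un_distrib2 Int_ac)
  then have "int m * int (card ((A \<union> B) \<inter> basis)) + int m * int (card ((A \<inter> B) \<inter> basis))
      = int m * int (card (A \<inter> basis)) + int m * int (card (B \<inter> basis))"
    by (metis distrib_left of_nat_add)
  moreover have "int m * int (card ((A \<inter> B) \<inter> basis)) \<le> \<delta> (A \<inter> B)"
    using delta_ge_basis fin by blast
  moreover have "int m * int (card ((A \<union> B) \<inter> basis)) \<le> \<delta> (A \<union> B)"
    using delta_ge_basis fin by blast
  moreover have "\<delta> (A \<union> B) + \<delta> (A \<inter> B) \<le> int m * int (card (A \<inter> basis)) + int m * int (card (B \<inter> basis))"
    using delta_submodular[OF fin(1,2), of m E] assms unfolding tight_def by simp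
  ultimately have "\<delta> (A \<union> B) = int m * int (card ((A \<union> B) \<inter> basis))" by linarith
  then show ?thesis using fin unfolding tight_def by simp
qed

lemma basis_not_adjacent_tight:
  assumes "tight basis A" "b \<in> basis" "b \<notin> A" "a \<in> A"
  shows "\<not> E b a"
proof
  assume "E b a"
  have A: "finite A" "A \<subseteq> V" using assms(1) unfolding tight_def by auto
  have "card (insert b A \<inter> basis) = Suc (card (A \<inter> basis))" using assms(2,3) A by simp
  then have "int m * int (card (A \<inter> basis)) + int m \<le> \<delta> (insert b A)"
    using delta_ge_basis[of "insert b A"] A assms(2) basis_subset_V by (auto simp: algebra_simps)
  moreover have "0 < card {a\<in>A. E b a}" using \<open>E b a\<close> assms(4) A by (auto simp: card_gt_0_iff)
  ultimately show False
    using delta_insert[OF graph A(1) assms(3), of m] assms(1) unfolding tight_def by linarith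
qed

lemma basis_not_adjacent: "b \<in> basis \<Longrightarrow> b' \<in> basis \<Longrightarrow> \<not> E b b'"
  using basis_not_adjacent_tight[OF tight_basis_subset_basis[of "{b'}"]] irrefl_E by (cases "b = b'") auto

lemma gcl_basis: "gcl m V E basis = V"
proof (intro subset_antisym subsetI)
  fix x assume x: "x \<in> V"
  then obtain D where D: "tight basis D" "x \<in> D" by (rule tight_basis_cover)
  define A where "A = D \<inter> basis"
  have D_fin: "finite D" "D \<subseteq> V" using D unfolding tight_def by auto
  have A: "finite A" "A \<subseteq> basis" unfolding A_def using D_fin by auto
  have cl_A: "cl m V E A = A" using cl_eq_self[OF A(1) tight_basis_strong[OF tight_basis_subset_basis[OF A(2,1)]]] .
  define C where "C = cl m V E (insert x A)"
  have C: "finite C" "insert x A \<subseteq> C" "strong m E C V" "C \<subseteq> D"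
    using cl_strong[OF D_fin(1) tight_basis_strong[OF D(1)], of "insert x A"] D(2)
    unfolding C_def A_def by auto
  have delta_A: "\<delta> A = int m * int (card A)"
    using tight_basis_subset_basis[OF A(2,1)] A(2) unfolding tight_def by (simp add: Int_absorb2)
  have "\<delta> C \<le> \<delta> D" using strong_delta_le[OF C(3) D_fin(1) C(4) D_fin(2)] .
  also have "\<dots> = \<delta> A" using D(1) delta_A unfolding tight_def A_def by simp
  finally have "\<delta> C \<le> \<delta> A" .
  moreover have "card A \<le> card (C \<inter> basis)" using C A by (intro card_mono) auto
  then have "\<delta> A \<le> int m * int (card (C \<inter> basis))" unfolding delta_A by (simp add: mult_left_mono)
  moreover have "int m * int (card (C \<inter> basis)) \<le> \<delta> C" using delta_ge_basis C(1,4) D_fin(2) by blast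
  ultimately have "reldim m V E x A = 0"
    unfolding reldim_def dim_def C_def[symmetric] cl_A by linarith
  then show "x \<in> gcl m V E basis" unfolding gcl_def using x A by blast
qed (auto simp: gcl_def)

lemma strong_basis_subset: "B0 \<subseteq> basis \<Longrightarrow> finite B0 \<Longrightarrow> strong m E B0 V"
  using tight_basis_strong tight_basis_subset_basis by blast

section \<open>Extending permutations of the basis\<close>

text \<open>Tight domains and ranges are what allow new basis points to be added without creating
  edges (\<open>basis_not_adjacent_tight\<close>).\<close>

definition partial_iso :: "('a \<Rightarrow> 'a) \<Rightarrow> ('a \<times> 'a) set \<Rightarrow> bool" where
  "partial_iso \<sigma> R \<longleftrightarrow> finite R \<and> iso_rel E R \<and> tight basis (Domain R) \<and> tight basis (Range R) \<and>
     (\<forall>x y. (x, y) \<in> R \<longrightarrow> (x \<in> basis \<longleftrightarrow> y \<in> basis) \<and> (x \<in> basis \<longrightarrow> y = \<sigma> x))"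

lemma partial_iso_empty: "partial_iso \<sigma> {}"
  unfolding partial_iso_def iso_rel_def using tight_basis_empty by simp

lemma partial_iso_converse:
  assumes "partial_iso \<sigma> R" "\<forall>b\<in>basis. \<tau> (\<sigma> b) = b"
  shows "partial_iso \<tau> (R\<inverse>)"
proof -
  have R: "finite R" "iso_rel E R" "tight basis (Domain R)" "tight basis (Range R)"
    and R_basis: "\<And>x y. (x, y) \<in> R \<Longrightarrow> (x \<in> basis \<longleftrightarrow> y \<in> basis) \<and> (x \<in> basis \<longrightarrow> y = \<sigma> x)"
    using assms(1) unfolding partial_iso_def by blast+
  have "(x \<in> basis \<longleftrightarrow> y \<in> basis) \<and> (x \<in> basis \<longrightarrow> y = \<tau> x)" if "(y, x) \<in> R" for x y
    using R_basis[OF that] assms(2) by auto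
  then show ?thesis using R unfolding partial_iso_def iso_rel_converse by simp
qed

lemma iso_rel_partial_iso_Un_basis:
  assumes \<sigma>: "inj_on \<sigma> basis" "\<sigma> ` basis \<subseteq> basis" and R: "partial_iso \<sigma> R"
    and B: "B \<subseteq> basis" "B \<inter> Domain R = {}"
  shows "iso_rel E (R \<union> (\<lambda>b. (b, \<sigma> b)) ` B)"
proof (rule iso_rel_Un)
  have R_iso: "iso_rel E R" and tight: "tight basis (Domain R)" "tight basis (Range R)"
    and R_basis: "\<And>x y. (x, y) \<in> R \<Longrightarrow> (x \<in> basis \<longleftrightarrow> y \<in> basis) \<and> (x \<in> basis \<longrightarrow> y = \<sigma> x)"
    using R unfolding partial_iso_def by blast+
  then show "iso_rel E R" by blast
  have \<sigma>_notin_Range: "\<sigma> b \<notin> Range R" if "b \<in> B" for b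
  proof
    assume "\<sigma> b \<in> Range R"
    then obtain x where x: "(x, \<sigma> b) \<in> R" by blast
    then have "x \<in> basis" "\<sigma> x = \<sigma> b" using R_basis[OF x] B(1) \<sigma>(2) that by auto
    then have "x = b" using inj_onD[OF \<sigma>(1)] B(1) that by blast
    then show False using x that B(2) by blast
  qed
  show "iso_rel E ((\<lambda>b. (b, \<sigma> b)) ` B)"
    unfolding iso_rel_def
  proof (intro allI impI)
    fix x y x' y' assume "(x, y) \<in> (\<lambda>b. (b, \<sigma> b)) ` B" "(x', y') \<in> (\<lambda>b. (b, \<sigma> b)) ` B"
    then obtain b b' where "b \<in> basis" "b' \<in> basis" "x = b" "y = \<sigma> b" "x' = b'" "y' = \<sigma> b'"
      using B(1) by blast
    moreover have "\<sigma> b \<in> basis" "\<sigma> b' \<in> basis" using calculation(1,2) \<sigma>(2) by auto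
    ultimately show "(x = x' \<longleftrightarrow> y = y') \<and> (E x x' \<longleftrightarrow> E y y')"
      using inj_onD[OF \<sigma>(1)] basis_not_adjacent by blast
  qed
  fix x y x' y' assume xy: "(x, y) \<in> R" and "(x', y') \<in> (\<lambda>b. (b, \<sigma> b)) ` B"
  then obtain b where b: "b \<in> B" "x' = b" "y' = \<sigma> b" by blast
  have in_R: "x \<in> Domain R" "y \<in> Range R" "b \<notin> Domain R" "\<sigma> b \<notin> Range R"
    using xy b B(2) \<sigma>_notin_Range by auto
  have "b \<in> basis" "\<sigma> b \<in> basis" using b(1) B(1) \<sigma>(2) by auto
  then have "\<not> E b x" "\<not> E (\<sigma> b) y"
    using basis_not_adjacent_tight[OF tight(1) _ in_R(3,1)] basis_not_adjacent_tight[OF tight(2) _ in_R(4,2)]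
    by blast+
  with in_R show "(x = x' \<longleftrightarrow> y = y') \<and> (E x x' \<longleftrightarrow> E y y') \<and> (E x' x \<longleftrightarrow> E y' y)"
    using b sym_E by blast
qed

lemma partial_iso_extend_basis:
  assumes \<sigma>: "inj_on \<sigma> basis" "\<sigma> ` basis \<subseteq> basis" and R: "partial_iso \<sigma> R"
    and B: "B \<subseteq> basis" "finite B"
  obtains g where "automorphism V E g" "\<And>x y. (x, y) \<in> R \<Longrightarrow> g x = y" "\<forall>b\<in>B. g b = \<sigma> b"
proof -
  have tight: "tight basis (Domain R)" "tight basis (Range R)"
    and R_basis: "\<And>x y. (x, y) \<in> R \<Longrightarrow> x \<in> basis \<Longrightarrow> y = \<sigma> x"
    using R unfolding partial_iso_def by blast+
  define B' where "B' = B - Domain R"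
  define R' where "R' = R \<union> (\<lambda>b. (b, \<sigma> b)) ` B'"
  have B': "B' \<subseteq> basis" "finite B'" "\<sigma> ` B' \<subseteq> basis" "finite (\<sigma> ` B')"
    unfolding B'_def using B \<sigma>(2) by auto
  have "finite R'" using R B'(2) unfolding R'_def partial_iso_def by simp
  moreover have "B' \<inter> Domain R = {}" unfolding B'_def by blast
  then have "iso_rel E R'" unfolding R'_def by (rule iso_rel_partial_iso_Un_basis[OF \<sigma> R B'(1)])
  moreover have "Domain R' = Domain R \<union> B'" "Range R' = Range R \<union> \<sigma> ` B'"
    unfolding R'_def by (auto simp: image_iff)
  then have "strong m E (Domain R') V" "strong m E (Range R') V"
    using tight_basis_Un[OF tight(1) tight_basis_subset_basis[OF B'(1,2)]]
      tight_basis_Un[OF tight(2) tight_basis_subset_basis[OF B'(3,4)]]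
    by (simp_all add: tight_basis_strong)
  ultimately obtain g where g: "automorphism V E g" "\<And>x y. (x, y) \<in> R' \<Longrightarrow> g x = y"
    by (rule homogeneous_iso_rel) blast
  have "g b = \<sigma> b" if "b \<in> B" for b
  proof (cases "b \<in> Domain R")
    case True
    then obtain y where "(b, y) \<in> R" by blast
    then show ?thesis using g(2) R_basis B(1) that unfolding R'_def by blast
  next
    case False
    then show ?thesis using g(2) that unfolding R'_def B'_def by blast
  qed
  then show thesis using that g unfolding R'_def by blast
qed

lemma automorphism_image_tight:
  assumes g: "automorphism V E g" and D: "tight basis D" and gB: "g ` (D \<inter> basis) \<subseteq> basis"
  shows "tight basis (g ` D)" "g ` D \<inter> basis = g ` (D \<inter> basis)"
proof -
  have D_fin: "finite D" "D \<subseteq> V" using D unfolding tight_def by auto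
  have inj: "inj_on g V" and gV: "g ` V = V" and edges: "\<forall>x\<in>V. \<forall>y\<in>V. E (g x) (g y) \<longleftrightarrow> E x y"
    using g unfolding automorphism_def bij_betw_def by auto
  have gD: "finite (g ` D)" "g ` D \<subseteq> V" using D_fin gV by auto
  have sub: "g ` (D \<inter> basis) \<subseteq> g ` D \<inter> basis" using gB by blast
  have "\<delta> (g ` D) = \<delta> D"
    using inj_on_subset[OF inj D_fin(2)] edges D_fin(2) by (intro delta_image) auto
  also have "\<dots> = int m * int (card (g ` (D \<inter> basis)))"
  proof -
    have "card (g ` (D \<inter> basis)) = card (D \<inter> basis)"
      using inj_on_subset[OF inj, of "D \<inter> basis"] D_fin(2) by (intro card_image) auto
    then show ?thesis using D unfolding tight_def by simp
  qed
  finally have eq: "\<delta> (g ` D) = int m * int (card (g ` (D \<inter> basis)))" .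
  have "card (g ` (D \<inter> basis)) \<le> card (g ` D \<inter> basis)" using sub gD by (intro card_mono) auto
  moreover have "int m * int (card (g ` D \<inter> basis)) \<le> \<delta> (g ` D)" using delta_ge_basis gD by blast
  ultimately have "card (g ` D \<inter> basis) = card (g ` (D \<inter> basis))"
    using eq m_ge_2 by (simp add: mult_le_cancel_left)
  then show "g ` D \<inter> basis = g ` (D \<inter> basis)"
    using card_subset_eq[OF _ sub] gD by simp
  then show "tight basis (g ` D)" using eq gD unfolding tight_def by simp
qed

lemma partial_iso_automorphism_graph:
  assumes g: "automorphism V E g" and D: "tight basis D"
    and g_basis: "\<forall>b\<in>D \<inter> basis. g b = \<sigma> b" and \<sigma>: "\<sigma> ` basis \<subseteq> basis"
  shows "partial_iso \<sigma> ((\<lambda>d. (d, g d)) ` D)"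
proof -
  define R where "R = (\<lambda>d. (d, g d)) ` D"
  have R: "(a, y) \<in> R \<longleftrightarrow> a \<in> D \<and> y = g a" for a y unfolding R_def by blast
  have D_fin: "finite D" "D \<subseteq> V" using D unfolding tight_def by auto
  have g_inj: "inj_on g V" and g_edges: "\<forall>x\<in>V. \<forall>y\<in>V. E (g x) (g y) \<longleftrightarrow> E x y"
    using g unfolding automorphism_def bij_betw_def by auto
  have "g ` (D \<inter> basis) \<subseteq> basis" using g_basis \<sigma> by auto
  note g_tight = automorphism_image_tight[OF g D this]
  have "iso_rel E R"
    unfolding iso_rel_def
  proof (intro allI impI)
    fix a y a' y' assume "(a, y) \<in> R" "(a', y') \<in> R"
    then have "a \<in> V" "a' \<in> V" "y = g a" "y' = g a'" using R D_fin(2) by auto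
    then show "(a = a' \<longleftrightarrow> y = y') \<and> (E a a' \<longleftrightarrow> E y y')"
      using inj_onD[OF g_inj] g_edges by auto
  qed
  moreover have "Domain R = D" "Range R = g ` D" using R by auto
  moreover have "(a \<in> basis \<longleftrightarrow> y \<in> basis) \<and> (a \<in> basis \<longrightarrow> y = \<sigma> a)" if "(a, y) \<in> R" for a y
  proof -
    have a: "a \<in> D" "y = g a" using that R by auto
    have "y \<in> basis \<Longrightarrow> a \<in> basis"
      using g_tight(2) a inj_onD[OF g_inj] D_fin(2) by blast
    then show ?thesis using g_basis \<sigma> a by auto
  qed
  moreover have "finite R" unfolding R_def using D_fin(1) by simp
  ultimately show ?thesis unfolding partial_iso_def R_def[symmetric] using D g_tight(1) by presburger
qed

lemma partial_iso_forth:
  assumes \<sigma>: "bij_betw \<sigma> basis basis" and R: "partial_iso \<sigma> R" and x: "x \<in> V"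
  shows "\<exists>R'. R \<subseteq> R' \<and> partial_iso \<sigma> R' \<and> x \<in> Domain R'"
proof -
  obtain Dx where Dx: "tight basis Dx" "x \<in> Dx" using tight_basis_cover[OF x] by blast
  define D where "D = Domain R \<union> Dx"
  have "tight basis (Domain R)" using R unfolding partial_iso_def by blast
  then have D: "tight basis D" unfolding D_def using tight_basis_Un Dx(1) by blast
  have \<sigma>_inj: "inj_on \<sigma> basis" and \<sigma>_img: "\<sigma> ` basis \<subseteq> basis"
    using \<sigma> unfolding bij_betw_def by auto
  have "D \<inter> basis \<subseteq> basis" "finite (D \<inter> basis)" using D unfolding tight_def by auto
  then obtain g where g: "automorphism V E g" "\<And>x y. (x, y) \<in> R \<Longrightarrow> g x = y"
    "\<forall>b\<in>D \<inter> basis. g b = \<sigma> b"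
    by (rule partial_iso_extend_basis[OF \<sigma>_inj \<sigma>_img R]) blast
  have "R \<subseteq> (\<lambda>d. (d, g d)) ` D"
  proof (rule subrelI)
    fix a y assume "(a, y) \<in> R"
    then show "(a, y) \<in> (\<lambda>d. (d, g d)) ` D" using g(2) unfolding D_def by force
  qed
  moreover have "x \<in> Domain ((\<lambda>d. (d, g d)) ` D)" using Dx(2) unfolding D_def by force
  ultimately show ?thesis using partial_iso_automorphism_graph[OF g(1) D g(3) \<sigma>_img] by blast
qed

lemma partial_iso_back_and_forth:
  assumes \<sigma>: "bij_betw \<sigma> basis basis" and R: "partial_iso \<sigma> R" and x: "x \<in> V"
  shows "\<exists>R'. R \<subseteq> R' \<and> partial_iso \<sigma> R' \<and> x \<in> Domain R' \<and> x \<in> Range R'"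
proof -
  define \<tau> where "\<tau> = inv_into basis \<sigma>"
  have \<tau>: "bij_betw \<tau> basis basis" unfolding \<tau>_def using \<sigma> by (rule bij_betw_inv_into)
  have \<tau>\<sigma>: "\<forall>b\<in>basis. \<tau> (\<sigma> b) = b" and \<sigma>\<tau>: "\<forall>b\<in>basis. \<sigma> (\<tau> b) = b"
    unfolding \<tau>_def using \<sigma> by (auto simp: bij_betw_def f_inv_into_f)
  obtain R1 where R1: "R \<subseteq> R1" "partial_iso \<sigma> R1" "x \<in> Domain R1"
    using partial_iso_forth[OF \<sigma> R x] by blast
  obtain R2 where R2: "R1\<inverse> \<subseteq> R2" "partial_iso \<tau> R2" "x \<in> Domain R2"
    using partial_iso_forth[OF \<tau> partial_iso_converse[OF R1(2) \<tau>\<sigma>] x] by blast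
  have "R \<subseteq> R2\<inverse>" using R1(1) R2(1) by auto
  moreover have "partial_iso \<sigma> (R2\<inverse>)" using partial_iso_converse[OF R2(2) \<sigma>\<tau>] by simp
  ultimately show ?thesis using R1(3) R2 by blast
qed

lemma automorphism_extends_basis_bij:
  assumes \<sigma>: "bij_betw \<sigma> basis basis"
  obtains g where "automorphism V E g" "\<forall>b\<in>basis. g b = \<sigma> b"
proof -
  obtain Rs where "\<forall>n. partial_iso \<sigma> (Rs n) \<and> Rs n \<subseteq> Rs (Suc n)"
    and Rs_cover: "V \<subseteq> Domain (\<Union>n. Rs n)" "V \<subseteq> Range (\<Union>n. Rs n)"
    by (rule back_and_forth_chain[OF countable_V partial_iso_empty partial_iso_back_and_forth[OF \<sigma>]])
  then have Rs: "partial_iso \<sigma> (Rs n)" "Rs n \<subseteq> Rs (Suc n)" for n by blast+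
  define R where "R = (\<Union>n. Rs n)"
  have "iso_rel E R"
    unfolding R_def using Rs unfolding partial_iso_def by (intro iso_rel_UN_incseq) blast+
  moreover have "x \<in> V \<and> y \<in> V" if xy: "(x, y) \<in> R" for x y
  proof -
    obtain n where "(x, y) \<in> Rs n" using xy unfolding R_def by blast
    then have "x \<in> Domain (Rs n)" "y \<in> Range (Rs n)" by blast+
    then show ?thesis using Rs(1)[of n] unfolding partial_iso_def tight_def by blast
  qed
  then have "Domain R = V" "Range R = V" using Rs_cover unfolding R_def by blast+
  ultimately obtain g where g: "automorphism V E g" "\<And>x y. (x, y) \<in> R \<Longrightarrow> g x = y"
    by (rule automorphism_of_iso_rel) blast
  have "g b = \<sigma> b" if b: "b \<in> basis" for b
  proof -
    obtain y where "(b, y) \<in> R" using \<open>Domain R = V\<close> basis_subset_V b by blast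
    moreover from this obtain n where "(b, y) \<in> Rs n" unfolding R_def by blast
    then have "y = \<sigma> b" using Rs(1)[of n] b unfolding partial_iso_def by blast
    ultimately show ?thesis using g(2) by blast
  qed
  then show thesis using that g(1) by blast
qed

end

theorem lemma8:
  fixes m :: nat and V :: "'a set" and E :: "'a \<Rightarrow> 'a \<Rightarrow> bool"
  assumes "m \<ge> 2" and "generic m V E"
  shows "\<exists>B \<subseteq> V. countable B \<and> gcl m V E B = V \<and>
           (\<forall>B0. B0 \<subseteq> B \<and> finite B0 \<longrightarrow> strong m E B0 V) \<and>
           (\<forall>\<sigma>. bij_betw \<sigma> B B \<longrightarrow> (\<exists>g. automorphism V E g \<and> (\<forall>b\<in>B. g b = \<sigma> b)))"
proof -
  interpret generic_graph m V E using assms by unfold_locales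
  show ?thesis
  proof (intro exI[of _ basis] conjI allI impI)
    show "basis \<subseteq> V" "countable basis" "gcl m V E basis = V"
      by (fact basis_subset_V countable_basis gcl_basis)+
    show "strong m E B0 V" if "B0 \<subseteq> basis \<and> finite B0" for B0
      using strong_basis_subset that by blast
    show "\<exists>g. automorphism V E g \<and> (\<forall>b\<in>basis. g b = \<sigma> b)" if "bij_betw \<sigma> basis basis" for \<sigma>
      using automorphism_extends_basis_bij[OF that] by blast
  qed
qed

end
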